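(* Consider the algorithm SCHEMATIC-ALGO$(G,\mu^*,m^*,\Delta^*,\gamma)$ described in the context, and let $V_{small}$, $E_{small}$ be the sets it defines at its final step. Then the graph $G_{small}:=(V_{small},E_{small})$ has maximum degree $O_\epsilon\left((\Delta^* )^\gamma\right)$.
   Context: Let $G=(V,E)$ be a graph with $n$ vertices, $m$ edges, average degree $d$; $\mu(G)$ is its maximum matching size. Fix a small constant $\epsilon\in(0,1)$ and $\beta:=1/\Theta(\epsilon^3)$. For $H\subseteq E$ and a pair $e=(u,v)$, $\deg_e(H):=\deg_u(H)+\deg_v(H)$. An edge $e$ is underfull w.r.t. $H$ if $\deg_e(H)<(1-\epsilon)\beta$ and overfull w.r.t. $H$ if $\deg_e(H)>\beta$. The parameters satisfy $\mu(G)/(2+\epsilon)\le\mu^*\le n$, $d\le\Delta^*\le n$, $m^*\ge m$, $0<\gamma<1$. SCHEMATIC-ALGO: set $H\leftarrow\emptyset$. Repeat rounds: in each round set Status $\leftarrow$ false; for $i=1,\dots,(100m^*\log n)/(\mu^*(\Delta^* )^\gamma)$, sample an edge $e\in E$ uniformly at random (independently, with repetition); if $e\in E\setminus H$ and $e$ is underfull w.r.t. $H$, then set Status $\leftarrow$ true, $H\leftarrow H\cup\{e\}$, and then while some edge of $H$ is overfull w.r.t. $H$, remove such an edge from $H$. If at the end of a round Status is false, stop the rounds (this is the last round). Then let $U$ be the set of edges of $E\setminus H$ underfull w.r.t. $H$, take any $V_{small}\subseteq V$ with $\{v:\deg_v(U)\le (1-\epsilon)(\Delta^* )^\gamma/\epsilon\}\subseteq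 V_{small}\subseteq\{v:\deg_v(U)\le(1+\epsilon)(\Delta^* )^\gamma/\epsilon\}$, let $E_{small}:=\{(u,v)\in H\cup U: u,v\in V_{small}\}$, and return $\mu(E_{small})$. $O_\epsilon(\cdot)$ hides factors depending only on $\epsilon$. *)

theory Defs
  imports Complex_Main
begin

definition simple_graph :: "'a set \<Rightarrow> 'a set set \<Rightarrow> bool" where
  "simple_graph V E \<longleftrightarrow> finite V \<and>
     (\<forall>e\<in>E. \<exists>u v. e = {u, v} \<and> u \<noteq> v \<and> u \<in> V \<and> v \<in> V)"

definition deg :: "'a \<Rightarrow> 'a set set \<Rightarrow> nat" where
  "deg v F = card {e \<in> F. v \<in> e}"

definition deg_edge :: "'a set \<Rightarrow> 'a set set \<Rightarrow> nat" where
  "deg_edge e F = (\<Sum>v\<in>e. deg v F)"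

definition underfull :: "real \<Rightarrow> real \<Rightarrow> 'a set set \<Rightarrow> 'a set \<Rightarrow> bool" where
  "underfull \<epsilon> \<beta> F e \<longleftrightarrow> real (deg_edge e F) < (1 - \<epsilon>) * \<beta>"

definition overfull :: "real \<Rightarrow> 'a set set \<Rightarrow> 'a set \<Rightarrow> bool" where
  "overfull \<beta> F e \<longleftrightarrow> real (deg_edge e F) > \<beta>"

definition matching :: "'a set set \<Rightarrow> bool" where
  "matching M \<longleftrightarrow> (\<forall>e1\<in>M. \<forall>e2\<in>M. e1 \<noteq> e2 \<longrightarrow> e1 \<inter> e2 = {})"

definition mu :: "'a set set \<Rightarrow> nat" where
  "mu F = Max (card ` {M. M \<subseteq> F \<and> matching M})"

text \<open>The while-loop: repeatedly remove some overfull edge (arbitrary choice)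
  until no edge of H is overfull.\<close>
inductive clean :: "real \<Rightarrow> 'a set set \<Rightarrow> 'a set set \<Rightarrow> bool" for \<beta> where
  finished: "\<not> (\<exists>e\<in>H. overfull \<beta> H e) \<Longrightarrow> clean \<beta> H H"
| remove: "e \<in> H \<Longrightarrow> overfull \<beta> H e \<Longrightarrow> clean \<beta> (H - {e}) H' \<Longrightarrow> clean \<beta> H H'"

text \<open>Processing one sampled edge e: state H becomes H'; the boolean records
  whether Status was set to true.\<close>
inductive sample_step ::
  "real \<Rightarrow> real \<Rightarrow> 'a set set \<Rightarrow> 'a set set \<Rightarrow> 'a set \<Rightarrow> 'a set set \<Rightarrow> bool \<Rightarrow> bool"
  for \<epsilon> \<beta> E where
  add: "e \<in> E - H \<Longrightarrow> underfull \<epsilon> \<beta> H e \<Longrightarrow> clean \<beta> (insert e H) H'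
        \<Longrightarrow> sample_step \<epsilon> \<beta> E H e H' True"
| skip: "\<not> (e \<in> E - H \<and> underfull \<epsilon> \<beta> H e) \<Longrightarrow> sample_step \<epsilon> \<beta> E H e H False"

text \<open>A round processing a list of samples; final boolean = Status at the end.\<close>
inductive round_run ::
  "real \<Rightarrow> real \<Rightarrow> 'a set set \<Rightarrow> 'a set set \<Rightarrow> 'a set list \<Rightarrow> 'a set set \<Rightarrow> bool \<Rightarrow> bool"
  for \<epsilon> \<beta> E where
  nil: "round_run \<epsilon> \<beta> E H [] H False"
| cons: "sample_step \<epsilon> \<beta> E H e H1 s1 \<Longrightarrow> round_run \<epsilon> \<beta> E H1 es H2 s2
         \<Longrightarrow> round_run \<epsilon> \<beta> E H (e # es) H2 (s1 \<or> s2)"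

text \<open>Quantifying over all sample sequences
  covers every possible outcome of the random sampling.\<close>
inductive rounds_run ::
  "real \<Rightarrow> real \<Rightarrow> 'a set set \<Rightarrow> nat \<Rightarrow> 'a set set \<Rightarrow> 'a set set \<Rightarrow> bool"
  for \<epsilon> \<beta> E L where
  final_round: "length es = L \<Longrightarrow> set es \<subseteq> E \<Longrightarrow> round_run \<epsilon> \<beta> E H es H' False
         \<Longrightarrow> rounds_run \<epsilon> \<beta> E L H H'"
| more: "length es = L \<Longrightarrow> set es \<subseteq> E \<Longrightarrow> round_run \<epsilon> \<beta> E H es H' True
         \<Longrightarrow> rounds_run \<epsilon> \<beta> E L H' H'' \<Longrightarrow> rounds_run \<epsilon> \<beta> E L H H''"

definition round_length :: "nat \<Rightarrow> real \<Rightarrow> real \<Rightarrow> real \<Rightarrow> real \<Rightarrow> nat" where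
  "round_length n ms mus Ds \<gamma> = nat \<lceil>100 * ms * ln (real n) / (mus * Ds powr \<gamma>)\<rceil>"

definition valid_params ::
  "real \<Rightarrow> 'a set \<Rightarrow> 'a set set \<Rightarrow> real \<Rightarrow> real \<Rightarrow> real \<Rightarrow> real \<Rightarrow> bool" where
  "valid_params \<epsilon> V E mus ms Ds \<gamma> \<longleftrightarrow>
     real (mu E) / (2 + \<epsilon>) \<le> mus \<and> mus \<le> real (card V) \<and>
     2 * real (card E) / real (card V) \<le> Ds \<and> Ds \<le> real (card V) \<and>
     real (card E) \<le> ms \<and> 0 < \<gamma> \<and> \<gamma> < 1"

definition schematic_final ::
  "real \<Rightarrow> real \<Rightarrow> 'a set \<Rightarrow> 'a set set \<Rightarrow> real \<Rightarrow> real \<Rightarrow> real \<Rightarrow> real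
   \<Rightarrow> 'a set set \<Rightarrow> 'a set set \<Rightarrow> 'a set \<Rightarrow> 'a set set \<Rightarrow> bool" where
  "schematic_final \<epsilon> \<beta> V E mus ms Ds \<gamma> H U Vs Es \<longleftrightarrow>
     rounds_run \<epsilon> \<beta> E (round_length (card V) ms mus Ds \<gamma>) {} H \<and>
     U = {e \<in> E - H. underfull \<epsilon> \<beta> H e} \<and>
     {v \<in> V. real (deg v U) \<le> (1 - \<epsilon>) * Ds powr \<gamma> / \<epsilon>} \<subseteq> Vs \<and>
     Vs \<subseteq> {v \<in> V. real (deg v U) \<le> (1 + \<epsilon>) * Ds powr \<gamma> / \<epsilon>} \<and>
     Es = {e \<in> H \<union> U. e \<subseteq> Vs}"

end

theory Submission
  imports Defs
begin

text \<open>Every run of the algorithm keeps H a subset of E without overfull edges, so each vertex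
  has H-degree at most \<beta> (it lies on an edge e with deg_e(H) \<le> \<beta>), while membership in
  V_small caps its degree in U by (1 + \<epsilon>)(\<Delta>*)^\<gamma>/\<epsilon>. Since E_small \<subseteq> H \<union> U and
  (\<Delta>*)^\<gamma> \<ge> 1, the degree in E_small is at most (\<beta> + (1 + \<epsilon>)/\<epsilon>)(\<Delta>*)^\<gamma>.\<close>

definition no_overfull :: "real \<Rightarrow> 'a set set \<Rightarrow> 'a set set \<Rightarrow> bool" where
  "no_overfull \<beta> E H \<longleftrightarrow> H \<subseteq> E \<and> (\<forall>e\<in>H. \<not> overfull \<beta> H e)"

lemma clean_no_overfull: "clean \<beta> H H' \<Longrightarrow> no_overfull \<beta> H H'"
  unfolding no_overfull_def by (induction rule: clean.induct) auto

lemma sample_step_no_overfull: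
  "sample_step \<epsilon> \<beta> E H e H' s \<Longrightarrow> no_overfull \<beta> E H \<Longrightarrow> no_overfull \<beta> E H'"
proof (induction rule: sample_step.induct)
  case (add e H H')
  then show ?case using clean_no_overfull[OF add(3)] unfolding no_overfull_def by auto
qed auto

lemma round_run_no_overfull:
  "round_run \<epsilon> \<beta> E H es H' s \<Longrightarrow> no_overfull \<beta> E H \<Longrightarrow> no_overfull \<beta> E H'"
  by (induction rule: round_run.induct) (auto dest: sample_step_no_overfull)

lemma rounds_run_no_overfull:
  "rounds_run \<epsilon> \<beta> E L H H' \<Longrightarrow> no_overfull \<beta> E H \<Longrightarrow> no_overfull \<beta> E H'"
  by (induction rule: rounds_run.induct) (auto dest: round_run_no_overfull)

lemma deg_le_deg_edge: "finite e \<Longrightarrow> v \<in> e \<Longrightarrow> deg v F \<le> deg_edge e F"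
  unfolding deg_edge_def by (rule member_le_sum) auto

lemma deg_Un_le: "deg v (A \<union> B) \<le> deg v A + deg v B"
proof -
  have "{e \<in> A \<union> B. v \<in> e} = {e \<in> A. v \<in> e} \<union> {e \<in> B. v \<in> e}" by auto
  then show ?thesis unfolding deg_def by (metis card_Un_le)
qed

lemma deg_mono: "finite B \<Longrightarrow> A \<subseteq> B \<Longrightarrow> deg v A \<le> deg v B"
  unfolding deg_def by (rule card_mono) auto

lemma deg_le_if_no_overfull:
  assumes "no_overfull \<beta> E H" "\<forall>e\<in>E. finite e" "0 \<le> \<beta>"
  shows "real (deg v H) \<le> \<beta>"
proof (cases "\<exists>e\<in>H. v \<in> e")
  case True
  then obtain e where e: "e \<in> H" "v \<in> e" by blast
  have "deg v H \<le> deg_edge e H"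
    using e assms(1,2) by (intro deg_le_deg_edge) (auto simp: no_overfull_def)
  moreover have "\<not> overfull \<beta> H e" using assms(1) e by (simp add: no_overfull_def)
  ultimately show ?thesis unfolding overfull_def by linarith
next
  case False
  then have "{e \<in> H. v \<in> e} = {}" by blast
  then have "deg v H = 0" unfolding deg_def by (metis card.empty)
  with assms(3) show ?thesis by simp
qed

lemma simple_graph_finite:
  assumes "simple_graph V E"
  shows "finite E" "\<forall>e\<in>E. finite e"
proof -
  have "E \<subseteq> Pow V" "finite V" using assms unfolding simple_graph_def by auto
  then show "finite E" by (meson finite_Pow_iff finite_subset)
  show "\<forall>e\<in>E. finite e" using assms unfolding simple_graph_def by auto
qed

lemma schematic_final_deg_le:
  assumes "simple_graph V E" "0 \<le> \<beta>"
    and final: "schematic_final \<epsilon> \<beta> V E mus ms Ds \<gamma> H U Vs Es" and "v \<in> Vs"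
  shows "real (deg v Es) \<le> \<beta> + (1 + \<epsilon>) * Ds powr \<gamma> / \<epsilon>"
proof -
  have "no_overfull \<beta> E {}" by (simp add: no_overfull_def)
  then have H: "no_overfull \<beta> E H"
    using final rounds_run_no_overfull unfolding schematic_final_def by blast
  have "finite (H \<union> U)"
    using H final simple_graph_finite(1)[OF assms(1)]
    by (auto simp: schematic_final_def no_overfull_def intro: finite_subset)
  then have "deg v Es \<le> deg v (H \<union> U)"
    using final by (intro deg_mono) (auto simp: schematic_final_def)
  also have "\<dots> \<le> deg v H + deg v U" by (rule deg_Un_le)
  finally have "real (deg v Es) \<le> real (deg v H) + real (deg v U)" by linarith
  moreover have "real (deg v H) \<le> \<beta>"
    using deg_le_if_no_overfull[OF H simple_graph_finite(2)[OF assms(1)] assms(2)] .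
  moreover have "real (deg v U) \<le> (1 + \<epsilon>) * Ds powr \<gamma> / \<epsilon>"
    using final \<open>v \<in> Vs\<close> by (auto simp: schematic_final_def)
  ultimately show ?thesis by linarith
qed

theorem lemma3p5:
  fixes \<epsilon> \<beta> :: real
  assumes "0 < \<epsilon>" "\<epsilon> < 1" "0 < \<beta>"
  shows "\<exists>C::real. \<forall>(V::'a set) E mus ms Ds \<gamma> H U Vs Es.
           simple_graph V E \<and> valid_params \<epsilon> V E mus ms Ds \<gamma> \<and> 1 \<le> Ds \<and>
           schematic_final \<epsilon> \<beta> V E mus ms Ds \<gamma> H U Vs Es
           \<longrightarrow> (\<forall>v\<in>Vs. real (deg v Es) \<le> C * Ds powr \<gamma>)"
proof (intro exI allI impI ballI)
  fix V :: "'a set" and E mus ms Ds \<gamma> H U Vs Es v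
  assume run: "simple_graph V E \<and> valid_params \<epsilon> V E mus ms Ds \<gamma> \<and> 1 \<le> Ds \<and>
           schematic_final \<epsilon> \<beta> V E mus ms Ds \<gamma> H U Vs Es" and "v \<in> Vs"
  then have deg_le: "real (deg v Es) \<le> \<beta> + (1 + \<epsilon>) / \<epsilon> * Ds powr \<gamma>"
    using schematic_final_deg_le[of V E \<beta>] assms(3) by auto
  have "1 \<le> Ds powr \<gamma>"
    using run by (intro ge_one_powr_ge_zero) (auto simp: valid_params_def)
  then have "\<beta> \<le> \<beta> * Ds powr \<gamma>" using assms(3) by simp
  with deg_le show "real (deg v Es) \<le> (\<beta> + (1 + \<epsilon>) / \<epsilon>) * Ds powr \<gamma>"
    by (simp add: distrib_right)
qed

end
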